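(* If $K_1,\ldots,K_d\subset\mathbb C$ are compact sets that are regular closed (i.e. $\overline{K_i^\circ}=K_i$ for each $i$), then \[ A(K_1\times\cdots\times K_d)=A_D(K_1\times\cdots\times K_d). \]
   Context: For a compact set $K\subset\mathbb C^d$: $A(K)$ is the algebra of continuous functions $K\to\mathbb C$ holomorphic on the interior $K^\circ$; $A_D(K)$ is the set of continuous functions $f:K\to\mathbb C$ such that for every open disc $D\subset\mathbb C$ and every injective holomorphic mapping $\phi:D\to\mathbb C^d$ with $\phi(D)\subset K$, the composition $f\circ\phi$ is holomorphic on $D$. *)

theory Defs
  imports "HOL-Complex_Analysis.Complex_Analysis"
begin

text \<open>C^d is modelled as complex ^ 'n for a finite index type 'n (d = CARD('n)).\<close>

definition complex_linear_vec :: "(complex ^ 'n \<Rightarrow> complex) \<Rightarrow> bool" where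
  "complex_linear_vec L \<longleftrightarrow> bounded_linear L \<and> (\<forall>c v. L (c *s v) = c * L v)"

definition holo_vec_on :: "(complex ^ 'n \<Rightarrow> complex) \<Rightarrow> (complex ^ 'n) set \<Rightarrow> bool" where
  "holo_vec_on f U \<longleftrightarrow> (\<forall>z\<in>U. \<exists>L. complex_linear_vec L \<and> (f has_derivative L) (at z))"

definition A_alg :: "(complex ^ 'n) set \<Rightarrow> (complex ^ 'n \<Rightarrow> complex) set" where
  "A_alg K = {f. continuous_on K f \<and> holo_vec_on f (interior K)}"

definition A_D :: "(complex ^ 'n) set \<Rightarrow> (complex ^ 'n \<Rightarrow> complex) set" where
  "A_D K = {f. continuous_on K f \<and>
     (\<forall>(a::complex) (r::real) (\<phi>::complex \<Rightarrow> complex ^ 'n).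
        r > 0 \<and> (\<forall>i. (\<lambda>z. \<phi> z $ i) holomorphic_on ball a r) \<and> inj_on \<phi> (ball a r)
        \<and> \<phi> ` ball a r \<subseteq> K \<longrightarrow> (f \<circ> \<phi>) holomorphic_on ball a r)}"

definition prod_set :: "('n \<Rightarrow> complex set) \<Rightarrow> (complex ^ 'n) set" where
  "prod_set K = {z. \<forall>i. z $ i \<in> K i}"

end

theory Submission
  imports Defs
begin

text \<open>
  For \<open>A(K) \<subseteq> A\<^sub>D(K)\<close>, let \<open>\<phi>\<close> be a holomorphic disc in \<open>K = K\<^sub>1 \<times> \<dots> \<times> K\<^sub>d\<close>.
  By the open mapping theorem each coordinate of \<open>\<phi>\<close> is either constant or lands in
  the interior of its factor; since every \<open>K\<^sub>i\<close> is the closure of its interior, the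
  constant coordinates can be moved to nearby interior points. This gives discs in the
  interior of \<open>K\<close> converging uniformly to \<open>\<phi>\<close>, and \<open>f \<circ> \<phi>\<close> is a uniform
  limit of holomorphic functions.

  For \<open>A\<^sub>D(K) \<subseteq> A(K)\<close>, coordinate lines through interior points are injective
  discs, so \<open>f\<close> is continuous and separately holomorphic on the interior; Osgood's
  lemma then applies: Cauchy's estimate on slices makes the partial derivatives continuous,
  and continuous partial derivatives give complex differentiability.
\<close>

lemma norm_axis_cart: "norm (axis k x :: 'a::real_normed_vector ^ 'n) = norm x"
proof -
  have "(\<Sum>i\<in>UNIV. (norm (axis k x $ i))\<^sup>2) = (norm x)\<^sup>2"
    by (simp add: axis_def if_distrib[of norm] if_distrib[of "\<lambda>t. t\<^sup>2"] cong: if_cong)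
  then show ?thesis by (simp add: norm_vec_def L2_set_def)
qed

lemma axis_zero_cart [simp]: "axis k 0 = (0 :: 'a::zero ^ 'n)"
  by (simp add: vec_eq_iff axis_def)

lemma dist_add_axis_le: "dist z (y + axis k s) \<le> dist z y + norm s"
proof -
  have "dist z (y + axis k s) \<le> dist z y + dist y (y + axis k s)"
    by (rule dist_triangle)
  also have "dist y (y + axis k s) = norm s"
    by (simp add: dist_norm norm_axis_cart)
  finally show ?thesis .
qed

lemma prod_set_eq_INT: "prod_set K = (\<Inter>i\<in>UNIV. (\<lambda>z. z $ i) -` K i)"
  by (auto simp: prod_set_def)

lemma closed_prod_set: "(\<And>i. closed (K i)) \<Longrightarrow> closed (prod_set K)"
  unfolding prod_set_eq_INT by (simp add: closed_INT closed_vimage_vec_nth)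

lemma open_prod_set: "(\<And>i. open (K i)) \<Longrightarrow> open (prod_set K)"
  unfolding prod_set_eq_INT by (simp add: open_INT open_vimage_vec_nth)

lemma norm_vec_le_sum: "norm (x::'a::real_normed_vector ^ 'n) \<le> (\<Sum>i\<in>UNIV. norm (x $ i))"
  unfolding norm_vec_def by (rule L2_set_le_sum) simp

lemma compact_prod_set:
  assumes "\<And>i. compact (K i)"
  shows "compact (prod_set K)"
proof -
  have "\<forall>i. \<exists>b. \<forall>x\<in>K i. norm x \<le> b"
    using assms compact_imp_bounded bounded_iff by metis
  then obtain B where B: "\<And>i x. x \<in> K i \<Longrightarrow> norm x \<le> B i"
    by metis
  have "norm z \<le> (\<Sum>i\<in>UNIV. B i)" if "z \<in> prod_set K" for z
    using norm_vec_le_sum[of z] sum_mono[of UNIV "\<lambda>i. norm (z $ i)" B] that B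
    by (force simp: prod_set_def)
  then have "bounded (prod_set K)"
    unfolding bounded_iff by blast
  then show ?thesis
    using assms by (simp add: compact_eq_bounded_closed closed_prod_set compact_imp_closed)
qed

lemma prod_set_interior_subset: "prod_set (\<lambda>i. interior (K i)) \<subseteq> interior (prod_set K)"
  by (intro interior_maximal open_prod_set) (auto simp: prod_set_def dest: interior_subset[THEN subsetD])

lemma has_derivative_vec_componentwise:
  fixes f :: "'a::real_normed_vector \<Rightarrow> 'b::euclidean_space ^ 'n"
  assumes "\<And>i. ((\<lambda>x. f x $ i) has_derivative (\<lambda>h. f' h $ i)) (at a within S)"
  shows "(f has_derivative f') (at a within S)"
proof (subst has_derivative_componentwise_within, intro ballI)
  fix b :: "'b ^ 'n" assume "b \<in> Basis"
  then obtain i c where b: "b = axis i c" "c \<in> Basis" by (auto simp: Basis_vec_def)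
  have "((\<lambda>x. f x $ i \<bullet> c) has_derivative (\<lambda>h. f' h $ i \<bullet> c)) (at a within S)"
    using assms[of i] by (intro has_derivative_inner_left)
  then show "((\<lambda>x. f x \<bullet> b) has_derivative (\<lambda>x. f' x \<bullet> b)) (at a within S)"
    using b by (simp add: inner_axis)
qed

lemma holo_vec_on_comp_holomorphic:
  fixes f :: "complex ^ 'n \<Rightarrow> complex" and \<psi> :: "complex \<Rightarrow> complex ^ 'n"
  assumes f: "holo_vec_on f U" and S: "open S"
    and \<psi>: "\<And>i. (\<lambda>z. \<psi> z $ i) holomorphic_on S" and sub: "\<psi> ` S \<subseteq> U"
  shows "(f \<circ> \<psi>) holomorphic_on S"
proof -
  have "(f \<circ> \<psi>) field_differentiable (at w)" if w: "w \<in> S" for w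
  proof -
    have "\<forall>i. \<exists>d. ((\<lambda>z. \<psi> z $ i) has_field_derivative d) (at w)"
      using \<psi> w S by (simp add: holomorphic_on_open)
    then obtain d where d: "\<And>i. ((\<lambda>z. \<psi> z $ i) has_field_derivative d i) (at w)"
      by metis
    have \<psi>': "(\<psi> has_derivative (\<lambda>h. h *s vec_lambda d)) (at w)"
      using d by (intro has_derivative_vec_componentwise)
        (simp add: has_field_derivative_def mult.commute[of _ "d _"])
    obtain L where L: "complex_linear_vec L" "(f has_derivative L) (at (\<psi> w))"
      using f sub w unfolding holo_vec_on_def by blast
    have "L \<circ> (\<lambda>h. h *s vec_lambda d) = (*) (L (vec_lambda d))"
      using L(1) by (auto simp: complex_linear_vec_def fun_eq_iff mult.commute)
    then show ?thesis
      using diff_chain_at[OF \<psi>' L(2)] by (auto simp: field_differentiable_def has_field_derivative_def)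
  qed
  then show ?thesis
    using S by (simp add: holomorphic_on_open field_differentiable_def)
qed

lemma uniform_limit_add_tendsto_zero:
  fixes v :: "'i \<Rightarrow> 'b::real_normed_vector"
  assumes "(v \<longlongrightarrow> 0) F"
  shows "uniform_limit S (\<lambda>n z. g z + v n) g F"
proof -
  have "uniform_limit S (\<lambda>n z. v n) (\<lambda>z. 0) F"
    using assms by (auto simp: uniform_limit_iff tendsto_iff)
  from uniform_limit_add[OF uniform_limit_const[where c = g] this]
  show ?thesis
    by simp
qed

lemma holomorphic_image_subset_interior:
  assumes "g holomorphic_on S" "open S" "connected S"
    and "\<not> g constant_on S" and "g ` S \<subseteq> K"
  shows "g ` S \<subseteq> interior K"
  using assms by (intro interior_maximal open_mapping_thm[of g S]) auto

lemma holomorphic_map_approx_in_interior: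
  fixes \<phi> :: "complex \<Rightarrow> complex ^ 'n::finite"
  assumes S: "open S" "connected S"
    and regular: "\<And>i. closure (interior (K i)) = K i"
    and hol: "\<And>i. (\<lambda>z. \<phi> z $ i) holomorphic_on S" and sub: "\<phi> ` S \<subseteq> prod_set K"
  obtains \<psi> :: "nat \<Rightarrow> complex \<Rightarrow> complex ^ 'n"
  where "\<And>n i. (\<lambda>z. \<psi> n z $ i) holomorphic_on S"
    and "\<And>n. \<psi> n ` S \<subseteq> interior (prod_set K)" and "uniform_limit S \<psi> \<phi> sequentially"
proof (cases "S = {}")
  case True
  then show ?thesis using that[of "\<lambda>n. \<phi>"] hol by auto
next
  case False
  then obtain a where a: "a \<in> S" by blast
  define J where "J = {i. \<not> (\<lambda>z. \<phi> z $ i) constant_on S}"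
  have open_coord: "\<phi> z $ i \<in> interior (K i)" if "i \<in> J" "z \<in> S" for i z
    using holomorphic_image_subset_interior[OF hol[of i] S, where K = "K i"] that sub
    by (auto simp: J_def prod_set_def)
  have const_coord: "\<phi> z $ i = \<phi> a $ i" if "i \<notin> J" "z \<in> S" for i z
    using that a by (auto simp: J_def constant_on_def)
  have "\<forall>i. \<exists>c. (\<forall>n. c n \<in> interior (K i)) \<and> c \<longlonglongrightarrow> \<phi> a $ i"
    using sub a regular by (auto simp: prod_set_def simp flip: closure_sequential)
  then obtain c where c: "\<And>i n. c i n \<in> interior (K i)" "\<And>i. c i \<longlonglongrightarrow> \<phi> a $ i"
    by metis
  define v where "v n = (\<chi> i. if i \<in> J then 0 else c i n - \<phi> a $ i)" for n
  have "(\<lambda>n. v n $ i) \<longlonglongrightarrow> 0 $ i" for i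
    using LIM_zero[OF c(2)[of i]] by (cases "i \<in> J") (simp_all add: v_def)
  then have v: "v \<longlonglongrightarrow> 0"
    by (rule vec_tendstoI)
  show ?thesis
  proof (rule that[of "\<lambda>n z. \<phi> z + v n"])
    show "(\<lambda>z. (\<phi> z + v n) $ i) holomorphic_on S" for n i
      using hol[of i] by (auto intro!: holomorphic_intros)
    show "(\<lambda>z. \<phi> z + v n) ` S \<subseteq> interior (prod_set K)" for n
    proof -
      have "(\<phi> z + v n) $ i \<in> interior (K i)" if "z \<in> S" for z i
        using open_coord[OF _ that] c(1)[of i n] const_coord[OF _ that]
        by (cases "i \<in> J") (simp_all add: v_def)
      then show ?thesis
        using prod_set_interior_subset[of K] by (auto simp: prod_set_def)
    qed
    show "uniform_limit S (\<lambda>n z. \<phi> z + v n) \<phi> sequentially"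
      using v by (rule uniform_limit_add_tendsto_zero)
  qed
qed

lemma A_alg_comp_holomorphic:
  fixes K :: "'n::finite \<Rightarrow> complex set" and \<phi> :: "complex \<Rightarrow> complex ^ 'n"
  assumes compact: "\<And>i. compact (K i)" and regular: "\<And>i. closure (interior (K i)) = K i"
    and f: "f \<in> A_alg (prod_set K)" and S: "open S" "connected S"
    and hol: "\<And>i. (\<lambda>z. \<phi> z $ i) holomorphic_on S" and sub: "\<phi> ` S \<subseteq> prod_set K"
  shows "(f \<circ> \<phi>) holomorphic_on S"
proof -
  obtain \<psi> :: "nat \<Rightarrow> complex \<Rightarrow> complex ^ 'n"
    where \<psi>: "\<And>n i. (\<lambda>z. \<psi> n z $ i) holomorphic_on S"
      and \<psi>_interior: "\<And>n. \<psi> n ` S \<subseteq> interior (prod_set K)"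
      and \<psi>_lim: "uniform_limit S \<psi> \<phi> sequentially"
    by (rule holomorphic_map_approx_in_interior[OF S regular hol sub]) auto
  have K: "compact (prod_set K)"
    using compact by (rule compact_prod_set)
  have "uniformly_continuous_on (prod_set K) f"
    using K f by (intro compact_uniformly_continuous) (simp add: A_alg_def)
  then have lim: "uniform_limit S (\<lambda>n z. f (\<psi> n z)) (\<lambda>z. f (\<phi> z)) sequentially"
  proof (rule uniform_limit_compose_uniformly_continuous_on[OF \<psi>_lim])
    show "\<forall>\<^sub>F n in sequentially. \<forall>z\<in>S. \<psi> n z \<in> prod_set K"
      using \<psi>_interior interior_subset by (intro always_eventually) blast
    show "closed (prod_set K)"
      using K by (rule compact_imp_closed)
  qed
  have "(f \<circ> \<psi> n) holomorphic_on S" for n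
    using f \<psi>_interior by (intro holo_vec_on_comp_holomorphic[OF _ S(1) \<psi>]) (auto simp: A_alg_def)
  then show ?thesis
    unfolding o_def
  proof (rule holomorphic_uniform_sequence[OF S(1)])
    fix z assume "z \<in> S"
    then obtain d where "d > 0" "cball z d \<subseteq> S"
      using S(1) open_contains_cball by blast
    then show "\<exists>d>0. cball z d \<subseteq> S \<and> uniform_limit (cball z d) (\<lambda>n z. f (\<psi> n z)) (\<lambda>z. f (\<phi> z)) sequentially"
      using uniform_limit_on_subset[OF lim] by blast
  qed
qed

lemma A_alg_subset_A_D:
  fixes K :: "'n::finite \<Rightarrow> complex set"
  assumes "\<And>i. compact (K i)" and "\<And>i. closure (interior (K i)) = K i"
  shows "A_alg (prod_set K) \<subseteq> A_D (prod_set K)"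
proof
  fix f assume f: "f \<in> A_alg (prod_set K)"
  have "(f \<circ> \<phi>) holomorphic_on ball a r"
    if "\<forall>i. (\<lambda>z. \<phi> z $ i) holomorphic_on ball a r" "\<phi> ` ball a r \<subseteq> prod_set K"
    for a r and \<phi> :: "complex \<Rightarrow> complex ^ 'n"
    using that by (intro A_alg_comp_holomorphic[OF assms f]) auto
  with f show "f \<in> A_D (prod_set K)"
    by (auto simp: A_D_def A_alg_def)
qed

definition partial_deriv :: "(complex ^ 'n \<Rightarrow> complex) \<Rightarrow> 'n \<Rightarrow> complex ^ 'n \<Rightarrow> complex" where
  "partial_deriv f k z = deriv (\<lambda>s. f (z + axis k s)) 0"

lemma has_field_derivative_partial_deriv:
  fixes f :: "complex ^ 'n \<Rightarrow> complex"
  assumes sep: "\<And>y k. y \<in> U \<Longrightarrow> (\<lambda>s. f (y + axis k s)) field_differentiable (at 0)"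
    and "x + axis k t \<in> U"
  shows "((\<lambda>s. f (x + axis k s)) has_field_derivative partial_deriv f k (x + axis k t)) (at t)"
proof -
  have "((\<lambda>s. f (x + axis k t + axis k s)) has_field_derivative partial_deriv f k (x + axis k t)) (at 0)"
    using sep[OF assms(2)] by (simp add: partial_deriv_def DERIV_deriv_iff_field_differentiable)
  then have "((\<lambda>s. f (x + axis k t + axis k (s - t))) has_field_derivative partial_deriv f k (x + axis k t)) (at t)"
    using DERIV_shift[of _ _ t "-t"] by simp
  moreover have "x + axis k t + axis k (s - t) = x + axis k s" for s
    by (simp add: vec_eq_iff axis_def)
  ultimately show ?thesis
    by simp
qed

lemma has_field_derivative_increment_bound:
  fixes g :: "'a::real_normed_field \<Rightarrow> 'a"
  assumes "\<And>s. norm s \<le> norm t \<Longrightarrow> (g has_field_derivative g' s) (at s)"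
    and "\<And>s. norm s \<le> norm t \<Longrightarrow> norm (g' s - c) \<le> B"
  shows "norm (g t - g 0 - t * c) \<le> B * norm t"
proof -
  have "norm ((g t - t * c) - (g 0 - 0 * c)) \<le> B * norm (t - 0)"
  proof (rule field_differentiable_bound[where S = "cball (0::'a) (norm t)"])
    fix s assume "s \<in> cball (0::'a) (norm t)"
    then have s: "norm s \<le> norm t" by simp
    show "((\<lambda>s. g s - s * c) has_field_derivative g' s - c) (at s within cball (0::'a) (norm t))"
      using DERIV_diff[OF assms(1)[OF s] DERIV_cmult_right[OF DERIV_ident, of c]]
      by (simp add: has_field_derivative_at_within)
    show "norm (g' s - c) \<le> B"
      using assms(2)[OF s] .
  qed (simp_all add: convex_cball)
  then show ?thesis
    by (simp add: algebra_simps)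
qed

lemma axis_increment_bound:
  fixes f :: "complex ^ 'n \<Rightarrow> complex" and P :: "'n \<Rightarrow> complex ^ 'n \<Rightarrow> complex" and \<eta> :: real
  assumes der: "\<And>x k t. x + axis k t \<in> ball z \<delta> \<Longrightarrow>
      ((\<lambda>s. f (x + axis k s)) has_field_derivative P k (x + axis k t)) (at t)"
    and P: "\<And>k y. y \<in> ball z \<delta> \<Longrightarrow> norm (P k y - P k z) \<le> \<eta>"
    and near: "dist z x + norm t < \<delta>"
  shows "norm (f (x + axis k t) - f x - t * P k z) \<le> \<eta> * norm t"
proof -
  have in_ball: "x + axis k s \<in> ball z \<delta>" if "norm s \<le> norm t" for s
    using dist_add_axis_le[of z x k s] that near by simp
  have "norm (f (x + axis k t) - f (x + axis k 0) - t * P k z) \<le> \<eta> * norm t"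
  proof (rule has_field_derivative_increment_bound[where g = "\<lambda>s. f (x + axis k s)"])
    fix s :: complex assume "norm s \<le> norm t"
    then have "x + axis k s \<in> ball z \<delta>"
      by (rule in_ball)
    then show "((\<lambda>s. f (x + axis k s)) has_field_derivative P k (x + axis k s)) (at s)"
      and "norm (P k (x + axis k s) - P k z) \<le> \<eta>"
      by (rule der, rule P)
  qed
  then show ?thesis
    by simp
qed

lemma partial_increments_bound:
  fixes f :: "complex ^ 'n \<Rightarrow> complex" and P :: "'n \<Rightarrow> complex ^ 'n \<Rightarrow> complex" and \<eta> :: real
  assumes der: "\<And>x k t. x + axis k t \<in> ball z \<delta> \<Longrightarrow>
      ((\<lambda>s. f (x + axis k s)) has_field_derivative P k (x + axis k t)) (at t)"
    and P: "\<And>k y. y \<in> ball z \<delta> \<Longrightarrow> norm (P k y - P k z) \<le> \<eta>"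
    and h: "2 * norm h < \<delta>" and "finite T"
  shows "norm (f (z + (\<chi> j. if j \<in> T then h $ j else 0)) - f z - (\<Sum>j\<in>T. h $ j * P j z))
    \<le> card T * \<eta> * norm h"
proof -
  have "z \<in> ball z \<delta>"
    using h norm_ge_zero[of h] by (simp, linarith)
  then have \<eta>: "0 \<le> \<eta>"
    using P[of z] by (meson norm_ge_zero order_trans)
  define hT where "hT T = (\<chi> j. if j \<in> T then h $ j else 0)" for T
  have "norm (f (z + hT T) - f z - (\<Sum>j\<in>T. h $ j * P j z)) \<le> card T * \<eta> * norm h"
    using \<open>finite T\<close>
  proof (induction T rule: finite_induct)
    case empty
    have "hT {} = 0"
      by (simp add: hT_def vec_eq_iff)
    then show ?case by simp
  next
    case (insert k T)
    define x where "x = z + hT T"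
    have x_step: "z + hT (insert k T) = x + axis k (h $ k)"
      by (simp add: x_def hT_def vec_eq_iff axis_def insert.hyps)
    have "norm (hT T) \<le> norm h"
      by (rule norm_le_componentwise_cart) (simp add: hT_def)
    then have near: "dist z x + norm (h $ k) < \<delta>"
      using h Finite_Cartesian_Product.norm_nth_le[of h k] by (simp add: x_def dist_norm)
    have "norm (f (x + axis k (h $ k)) - f x - h $ k * P k z) \<le> \<eta> * norm (h $ k)"
      by (rule axis_increment_bound[OF der P near])
    also have "\<dots> \<le> \<eta> * norm h"
      using Finite_Cartesian_Product.norm_nth_le \<eta> by (rule mult_left_mono)
    finally have step: "norm (f (z + hT (insert k T)) - f x - h $ k * P k z) \<le> \<eta> * norm h"
      by (simp add: x_step)
    have split: "f (z + hT (insert k T)) - f z - (\<Sum>j\<in>insert k T. h $ j * P j z)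
        = (f (z + hT (insert k T)) - f x - h $ k * P k z) + (f x - f z - (\<Sum>j\<in>T. h $ j * P j z))"
      using insert.hyps by (simp add: algebra_simps)
    have "norm (f (z + hT (insert k T)) - f z - (\<Sum>j\<in>insert k T. h $ j * P j z))
        \<le> norm (f (z + hT (insert k T)) - f x - h $ k * P k z) + norm (f x - f z - (\<Sum>j\<in>T. h $ j * P j z))"
      unfolding split by (rule norm_triangle_ineq)
    also have "\<dots> \<le> \<eta> * norm h + card T * \<eta> * norm h"
      using step insert.IH[folded x_def] by (rule add_mono)
    finally show ?case
      using insert.hyps by (simp add: distrib_right)
  qed
  then show ?thesis
    by (simp add: hT_def)
qed

lemma norm_partial_deriv_diff_le:
  fixes f :: "complex ^ 'n \<Rightarrow> complex"
  assumes sep: "\<And>y k. y \<in> U \<Longrightarrow> (\<lambda>s. f (y + axis k s)) field_differentiable (at 0)"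
    and \<epsilon>: "\<epsilon> > 0"
    and in_U: "\<And>s. norm s \<le> \<epsilon> \<Longrightarrow> y + axis k s \<in> U \<and> z + axis k s \<in> U"
    and bound: "\<And>s. norm s = \<epsilon> \<Longrightarrow> norm (f (y + axis k s) - f (z + axis k s)) \<le> B"
  shows "norm (partial_deriv f k y - partial_deriv f k z) \<le> B / \<epsilon>"
proof -
  define D where "D s = f (y + axis k s) - f (z + axis k s)" for s
  have D': "(D has_field_derivative partial_deriv f k (y + axis k s) - partial_deriv f k (z + axis k s)) (at s)"
    if "norm s \<le> \<epsilon>" for s
    unfolding D_def using in_U[OF that]
    by (intro DERIV_diff has_field_derivative_partial_deriv[OF sep]) auto
  have "norm ((deriv ^^ 1) D 0) \<le> fact 1 * B / \<epsilon> ^ 1"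
  proof (rule Cauchy_inequality)
    show "D holomorphic_on ball 0 \<epsilon>"
      unfolding holomorphic_on_open[OF open_ball]
    proof
      fix s :: complex assume "s \<in> ball 0 \<epsilon>"
      then show "\<exists>D''. (D has_field_derivative D'') (at s)"
        using D'[of s] by auto
    qed
    show "continuous_on (cball 0 \<epsilon>) D"
      using DERIV_isCont[OF D'] by (intro continuous_at_imp_continuous_on) simp
    show "norm (D s) \<le> B" if "norm (0 - s) = \<epsilon>" for s
      using bound[of s] that by (simp add: D_def)
  qed (rule \<epsilon>)
  moreover have "deriv D 0 = partial_deriv f k y - partial_deriv f k z"
    using D'[of 0] \<epsilon> by (simp add: DERIV_imp_deriv)
  ultimately show ?thesis
    by simp
qed

lemma isCont_partial_deriv:
  fixes f :: "complex ^ 'n \<Rightarrow> complex"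
  assumes U: "open U" and cont: "continuous_on U f"
    and sep: "\<And>y k. y \<in> U \<Longrightarrow> (\<lambda>s. f (y + axis k s)) field_differentiable (at 0)"
    and z: "z \<in> U"
  shows "isCont (partial_deriv f k) z"
proof -
  obtain r where r: "r > 0" "cball z r \<subseteq> U"
    using U z open_contains_cball by blast
  define \<epsilon> where "\<epsilon> = r / 2"
  have \<epsilon>: "\<epsilon> > 0" "cball z (2 * \<epsilon>) \<subseteq> U"
    using r by (simp_all add: \<epsilon>_def)
  have near: "y + axis k s \<in> cball z (2 * \<epsilon>)" if "dist y z < \<epsilon>" "norm s \<le> \<epsilon>" for y s
    using dist_add_axis_le[of z y k s] that by (simp add: dist_commute)
  have unif: "uniformly_continuous_on (cball z (2 * \<epsilon>)) f"
    using continuous_on_subset[OF cont \<epsilon>(2)] by (rule compact_uniformly_continuous) simp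
  have "\<exists>d>0. \<forall>y. dist y z < d \<longrightarrow> dist (partial_deriv f k y) (partial_deriv f k z) < e"
    if e: "e > 0" for e
  proof -
    have "e / 2 * \<epsilon> > 0"
      using e \<epsilon>(1) by simp
    then obtain d where d: "d > 0" and fd: "\<And>u v. u \<in> cball z (2 * \<epsilon>) \<Longrightarrow> v \<in> cball z (2 * \<epsilon>) \<Longrightarrow>
        dist v u < d \<Longrightarrow> dist (f v) (f u) < e / 2 * \<epsilon>"
      using unif[unfolded uniformly_continuous_on_def, rule_format] by blast
    have "dist (partial_deriv f k y) (partial_deriv f k z) < e" if y: "dist y z < min d \<epsilon>" for y
    proof -
      have "norm (partial_deriv f k y - partial_deriv f k z) \<le> e / 2 * \<epsilon> / \<epsilon>"
      proof (rule norm_partial_deriv_diff_le[OF sep \<epsilon>(1)])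
        show "y + axis k s \<in> U \<and> z + axis k s \<in> U" if "norm s \<le> \<epsilon>" for s
          using near[OF _ that] y \<epsilon> by auto
        show "norm (f (y + axis k s) - f (z + axis k s)) \<le> e / 2 * \<epsilon>" if "norm s = \<epsilon>" for s
          using fd[OF near[of z s] near[of y s]] that y \<epsilon>(1) by (simp add: dist_norm)
      qed
      then show ?thesis
        using \<epsilon> e by (simp add: dist_norm)
    qed
    then show ?thesis
      using d \<epsilon> by (intro exI[of _ "min d \<epsilon>"]) auto
  qed
  then show ?thesis
    unfolding continuous_at_eps_delta by blast
qed

lemma isCont_finite_family_ball:
  fixes P :: "'i::finite \<Rightarrow> 'a::metric_space \<Rightarrow> 'b::real_normed_vector"
  assumes "\<And>k. isCont (P k) z" and "\<eta> > 0"
  obtains \<delta> where "\<delta> > 0" and "\<And>k y. y \<in> ball z \<delta> \<Longrightarrow> norm (P k y - P k z) \<le> \<eta>"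
proof -
  have "(P k \<longlongrightarrow> P k z) (nhds z)" for k
    using assms(1)[of k] by (simp add: isCont_def tendsto_at_iff_tendsto_nhds)
  then have "\<forall>\<^sub>F y in nhds z. \<forall>k. dist (P k y) (P k z) < \<eta>"
    using assms(2) by (intro eventually_all_finite) (auto simp: tendsto_iff)
  then obtain \<delta> where "\<delta> > 0" "\<And>k y. dist y z < \<delta> \<Longrightarrow> dist (P k y) (P k z) < \<eta>"
    unfolding eventually_nhds_metric by blast
  then show ?thesis
    by (intro that[of \<delta>]) (auto simp: dist_commute dist_norm less_imp_le)
qed

lemma has_derivative_of_continuous_partials:
  fixes f :: "complex ^ 'n \<Rightarrow> complex" and P :: "'n \<Rightarrow> complex ^ 'n \<Rightarrow> complex"
  assumes U: "open U" "z \<in> U"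
    and der: "\<And>x k t. x + axis k t \<in> U \<Longrightarrow>
      ((\<lambda>s. f (x + axis k s)) has_field_derivative P k (x + axis k t)) (at t)"
    and cont: "\<And>k. isCont (P k) z"
  shows "(f has_derivative (\<lambda>h. \<Sum>k\<in>UNIV. h $ k * P k z)) (at z)"
  unfolding has_derivative_at_alt
proof (intro conjI allI impI)
  show "bounded_linear (\<lambda>h. \<Sum>k\<in>UNIV. h $ k * P k z)"
    by (intro bounded_linear_sum bounded_linear_mult_const bounded_linear_vec_nth)
  fix e :: real assume e: "e > 0"
  define \<eta> where "\<eta> = e / CARD('n)"
  obtain \<delta> where \<delta>: "\<delta> > 0" "ball z \<delta> \<subseteq> U"
    and P: "\<And>k y. y \<in> ball z \<delta> \<Longrightarrow> norm (P k y - P k z) \<le> \<eta>"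
  proof -
    have "\<eta> > 0"
      using e by (simp add: \<eta>_def)
    then obtain d1 where d1: "d1 > 0" "\<And>k y. y \<in> ball z d1 \<Longrightarrow> norm (P k y - P k z) \<le> \<eta>"
      by (rule isCont_finite_family_ball[where P = P, OF cont]) blast
    obtain d2 where d2: "d2 > 0" "ball z d2 \<subseteq> U"
      using U open_contains_ball by blast
    show ?thesis
      using d1 d2 by (intro that[of "min d1 d2"]) auto
  qed
  have der_near: "x + axis k t \<in> ball z \<delta> \<Longrightarrow>
      ((\<lambda>s. f (x + axis k s)) has_field_derivative P k (x + axis k t)) (at t)" for x k t
    using der \<delta>(2) by blast
  have incr: "norm (f (z + h) - f z - (\<Sum>k\<in>UNIV. h $ k * P k z)) \<le> CARD('n) * \<eta> * norm h"
    if "2 * norm h < \<delta>" for h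
    using partial_increments_bound[OF der_near P that, of UNIV] by simp
  then have "norm (f y - f z - (\<Sum>k\<in>UNIV. (y - z) $ k * P k z)) \<le> e * norm (y - z)"
    if "norm (y - z) < \<delta> / 2" for y
    using incr[of "y - z"] that by (simp add: \<eta>_def)
  then show "\<exists>d>0. \<forall>y. norm (y - z) < d \<longrightarrow>
      norm (f y - f z - (\<Sum>k\<in>UNIV. (y - z) $ k * P k z)) \<le> e * norm (y - z)"
    using \<delta>(1) by (intro exI[of _ "\<delta> / 2"]) auto
qed

lemma complex_linear_vec_sum_coordinates:
  "complex_linear_vec (\<lambda>h. \<Sum>k\<in>UNIV. h $ k * c k)"
  unfolding complex_linear_vec_def
  by (auto intro!: bounded_linear_sum bounded_linear_mult_const bounded_linear_vec_nth
      simp: sum_distrib_left mult.assoc)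

lemma continuous_separately_holomorphic_imp_holo_vec_on:
  fixes f :: "complex ^ 'n \<Rightarrow> complex"
  assumes U: "open U" and cont: "continuous_on U f"
    and sep: "\<And>y k. y \<in> U \<Longrightarrow> (\<lambda>s. f (y + axis k s)) field_differentiable (at 0)"
  shows "holo_vec_on f U"
  unfolding holo_vec_on_def
proof
  fix z assume z: "z \<in> U"
  have "(f has_derivative (\<lambda>h. \<Sum>k\<in>UNIV. h $ k * partial_deriv f k z)) (at z)"
  proof (rule has_derivative_of_continuous_partials[where P = "partial_deriv f", OF U z])
    show "((\<lambda>s. f (x + axis k s)) has_field_derivative partial_deriv f k (x + axis k t)) (at t)"
      if "x + axis k t \<in> U" for x k t
      using sep that by (rule has_field_derivative_partial_deriv)
    show "isCont (partial_deriv f k) z" for k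
      using U cont sep z by (rule isCont_partial_deriv)
  qed
  then show "\<exists>L. complex_linear_vec L \<and> (f has_derivative L) (at z)"
    using complex_linear_vec_sum_coordinates by (intro exI conjI)
qed

lemma A_D_field_differentiable_along_axis:
  fixes f :: "complex ^ 'n \<Rightarrow> complex"
  assumes f: "f \<in> A_D S" and y: "y \<in> interior S"
  shows "(\<lambda>s. f (y + axis k s)) field_differentiable (at 0)"
proof -
  obtain r where r: "r > 0" "ball y r \<subseteq> interior S"
    using open_interior[of S] y unfolding open_contains_ball by blast
  define \<phi> where "\<phi> s = y + axis k s" for s :: complex
  have "(\<lambda>s. \<phi> s $ i) holomorphic_on ball 0 r" for i
    by (cases "i = k") (auto simp: \<phi>_def axis_def intro!: holomorphic_intros)
  moreover have "inj_on \<phi> (ball 0 r)"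
    by (auto simp: inj_on_def \<phi>_def axis_eq_axis)
  moreover have "\<phi> ` ball 0 r \<subseteq> S"
  proof
    fix u assume "u \<in> \<phi> ` ball 0 r"
    then obtain s where "norm s < r" "u = y + axis k s"
      by (auto simp: \<phi>_def)
    then have "u \<in> ball y r"
      by (simp add: dist_norm norm_axis_cart)
    then show "u \<in> S"
      using r(2) interior_subset by blast
  qed
  ultimately have "(f \<circ> \<phi>) holomorphic_on ball 0 r"
    using f r(1) by (simp add: A_D_def)
  then show ?thesis
    using r by (intro holomorphic_on_imp_differentiable_at[of _ "ball 0 r"]) (auto simp: \<phi>_def o_def)
qed

lemma A_D_subset_A_alg: "A_D S \<subseteq> A_alg S"
proof
  fix f assume f: "f \<in> A_D S"
  then have cont: "continuous_on S f"
    by (simp add: A_D_def)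
  have "holo_vec_on f (interior S)"
    using f by (intro continuous_separately_holomorphic_imp_holo_vec_on open_interior
        continuous_on_subset[OF cont interior_subset] A_D_field_differentiable_along_axis)
  with cont show "f \<in> A_alg S"
    by (simp add: A_alg_def)
qed

theorem mainTheorem10:
  fixes K :: "'n::finite \<Rightarrow> complex set"
  assumes "\<And>i. compact (K i)"
    and "\<And>i. closure (interior (K i)) = K i"
  shows "A_alg (prod_set K) = A_D (prod_set K)"
  using A_alg_subset_A_D[OF assms] A_D_subset_A_alg by (rule subset_antisym)

end
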